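(* Assume the setting and notation described in the context, with $1\le p<s\le d$, $\omega>0$, and with the following nondegeneracy conditions: - $\mathbf A_R(\omega)$ is invertible; - $\mathbf A_V(\omega)$ is invertible if $s<d$; - $a_{s,s}(\omega)\ne0$; - $\mathbf a_R^{\mathrm T}(\omega)\mathbf A_R^{-1}(\omega)\mathbf D_a\neq0$. Let $\vec f_d,\vec f_a\in\mathbb C$ and $\vec{\mathbf x}\in\mathbb C^d$ satisfy $\mathbf A(\omega)\vec{\mathbf x}=\mathbf B_d\vec f_d+\mathbf B_a\vec f_a$ and $\vec x_s=0$, where $\vec f_a$ is an arbitrary absorber force phasor, produced by any absorber and any control law. Then, for every link $i=1,\dots,d+1$, the maximal elastic potential energy $W_{i,\max}=\tfrac12k_i|\vec x_i-\vec x_{i-1}|^2$ (with $\vec x_0=\vec x_{d+1}=0$) is a function only of: - the frequency $\omega$; - the disturbance amplitude $|\vec f_d|$; - the structural parameters $\{m_i: 1\le i\le d,\ i\ne s\}$ and $\{k_i,c_i: 1\le i\le d+1\}$. In particular, these maximal energies do not depend on the parameters (mass, stiffness, damping) of the absorber or on the control law generating $\vec f_a$. Hence they cannot be modified by the absorber design or its control, but only by changing the structural parameters of the chain.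
   Context: A chain of $d\ge 2$ masses $m_1,\dots,m_d>0$ is considered. For $1\le i\le d+1$, link $i$ connects mass $i-1$ and mass $i$ through a spring $k_i>0$ and a damper $c_i\ge0$, where "mass $0$" and "mass $d+1$" denote the fixed base. - $\mathbf M=\mathrm{diag}(m_1,\dots,m_d)$. - $\mathbf K$ is tridiagonal with $K_{ii}=k_i+k_{i+1}$ and $K_{i,i+1}=K_{i+1,i}=-k_{i+1}$; all other entries are zero. - $\mathbf C$ is defined likewise with the $c_i$. - $\mathbf A(\omega)=-\omega^2\mathbf M+\jmath\omega\mathbf C+\mathbf K$ for a fixed $\omega>0$. Steady-state phasors satisfy $\mathbf A(\omega)\vec{\mathbf x}=\mathbf B_d\vec f_d+\mathbf B_a\vec f_a$, where $\mathbf B_d=\mathbf e_d$ and $\mathbf B_a=\mathbf e_p$ are standard unit vectors of $\mathbb C^d$. Here $\vec f_d$ is the disturbance force phasor acting on $m_d$, and $\vec f_a$ is the total force in the link of an active absorber mounted on $m_p$. With $1\le p<s\le d$, the block decomposition of $\mathbf A(\omega)$ according to indices $\{1,\dots,s-1\}$, $\{s\}$, $\{s+1,\dots,d\}$ is $$\mathbf A=\begin{bmatrix}\mathbf A_R&\mathbf a_R&\mathbf 0\\ \mathbf a_R^{\mathrm T}&a_{s,s}&\mathbf a_V^{\mathrm T}\\ \mathbf 0&\mathbf a_V&\mathbf A_V\end{bmatrix},$$ where: - $\mathbf a_R=(0,\dots,0,-k_s-\jmath\omega c_s)^{\mathrm T}\in\mathbb C^{s-1}$; - $\mathbf a_V=(-k_{s+1}-\jmath\omega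 c_{s+1},0,\dots,0)^{\mathrm T}\in\mathbb C^{d-s}$; - $a_{s,s}=-\omega^2m_s+k_s+k_{s+1}+\jmath\omega(c_s+c_{s+1})$. $\mathbf D_a\in\mathbb R^{s-1}$ is the $p$-th standard unit vector, and $\mathbf D_d\in\mathbb R^{d-s}$ is the last standard unit vector. $W_{i,\max}=\tfrac12k_i|\vec x_i-\vec x_{i-1}|^2$ is the maximum over $t$ of the elastic energy $\tfrac12k_i(x_i(t)-x_{i-1}(t))^2$ in link $i$, where $x_i(t)=\Re(\vec x_ie^{\jmath\omega t})$. *)

theory Defs
  imports Complex_Main "Jordan_Normal_Form.Gauss_Jordan_Elimination"
begin

text \<open>Chain of masses; all indices below are 1-based as in the paper
  (mass 0 and mass d+1 denote the fixed base). Matrices/vectors of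
  Jordan_Normal_Form are 0-based, so paper entry (i,j) is JNF entry (i-1,j-1).\<close>

definition link_imp :: "(nat \<Rightarrow> real) \<Rightarrow> (nat \<Rightarrow> real) \<Rightarrow> real \<Rightarrow> nat \<Rightarrow> complex" where
  "link_imp k c \<omega> i = complex_of_real (k i) + \<i> * complex_of_real (\<omega> * c i)"

text \<open>Entry (i,j) (1-based) of A(omega) = -omega^2 M + j omega C + K.\<close>
definition A_entry :: "(nat \<Rightarrow> real) \<Rightarrow> (nat \<Rightarrow> real) \<Rightarrow> (nat \<Rightarrow> real) \<Rightarrow> real \<Rightarrow> nat \<Rightarrow> nat \<Rightarrow> complex" where
  "A_entry m k c \<omega> i j =
     (if i = j then - complex_of_real (\<omega>^2 * m i) + link_imp k c \<omega> i + link_imp k c \<omega> (i+1)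
      else if j = i + 1 then - link_imp k c \<omega> (i+1)
      else if i = j + 1 then - link_imp k c \<omega> i
      else 0)"

definition A_mat :: "nat \<Rightarrow> (nat \<Rightarrow> real) \<Rightarrow> (nat \<Rightarrow> real) \<Rightarrow> (nat \<Rightarrow> real) \<Rightarrow> real \<Rightarrow> complex mat" where
  "A_mat d m k c \<omega> = mat d d (\<lambda>(i,j). A_entry m k c \<omega> (i+1) (j+1))"

definition A_R :: "nat \<Rightarrow> (nat \<Rightarrow> real) \<Rightarrow> (nat \<Rightarrow> real) \<Rightarrow> (nat \<Rightarrow> real) \<Rightarrow> real \<Rightarrow> complex mat" where
  "A_R s m k c \<omega> = mat (s-1) (s-1) (\<lambda>(i,j). A_entry m k c \<omega> (i+1) (j+1))"

definition A_V :: "nat \<Rightarrow> nat \<Rightarrow> (nat \<Rightarrow> real) \<Rightarrow> (nat \<Rightarrow> real) \<Rightarrow> (nat \<Rightarrow> real) \<Rightarrow> real \<Rightarrow> complex mat" where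
  "A_V d s m k c \<omega> = mat (d-s) (d-s) (\<lambda>(i,j). A_entry m k c \<omega> (s+1+i) (s+1+j))"

definition a_R :: "nat \<Rightarrow> (nat \<Rightarrow> real) \<Rightarrow> (nat \<Rightarrow> real) \<Rightarrow> real \<Rightarrow> complex vec" where
  "a_R s k c \<omega> = vec (s-1) (\<lambda>i. if i + 2 = s then - link_imp k c \<omega> s else 0)"

definition a_ss :: "nat \<Rightarrow> (nat \<Rightarrow> real) \<Rightarrow> (nat \<Rightarrow> real) \<Rightarrow> (nat \<Rightarrow> real) \<Rightarrow> real \<Rightarrow> complex" where
  "a_ss s m k c \<omega> = A_entry m k c \<omega> s s"

definition D_a :: "nat \<Rightarrow> nat \<Rightarrow> complex vec" where
  "D_a s p = unit_vec (s-1) (p-1)"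

definition chain_params :: "nat \<Rightarrow> (nat \<Rightarrow> real) \<Rightarrow> (nat \<Rightarrow> real) \<Rightarrow> (nat \<Rightarrow> real) \<Rightarrow> bool" where
  "chain_params d m k c \<longleftrightarrow>
     (\<forall>i\<in>{1..d}. m i > 0) \<and> (\<forall>i\<in>{1..d+1}. k i > 0) \<and> (\<forall>i\<in>{1..d+1}. c i \<ge> 0)"

definition nondegenerate :: "nat \<Rightarrow> nat \<Rightarrow> nat \<Rightarrow> real \<Rightarrow> (nat \<Rightarrow> real) \<Rightarrow> (nat \<Rightarrow> real) \<Rightarrow> (nat \<Rightarrow> real) \<Rightarrow> bool" where
  "nondegenerate d p s \<omega> m k c \<longleftrightarrow>
     invertible_mat (A_R s m k c \<omega>) \<and>
     (s < d \<longrightarrow> invertible_mat (A_V d s m k c \<omega>)) \<and>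
     a_ss s m k c \<omega> \<noteq> 0 \<and>
     a_R s k c \<omega> \<bullet> (the (mat_inverse (A_R s m k c \<omega>)) *\<^sub>v D_a s p) \<noteq> 0"

text \<open>Steady state: A x = B_d f_d + B_a f_a with B_d = e_d, B_a = e_p.\<close>
definition steady_state :: "nat \<Rightarrow> nat \<Rightarrow> real \<Rightarrow> (nat \<Rightarrow> real) \<Rightarrow> (nat \<Rightarrow> real) \<Rightarrow> (nat \<Rightarrow> real)
    \<Rightarrow> complex \<Rightarrow> complex \<Rightarrow> complex vec \<Rightarrow> bool" where
  "steady_state d p \<omega> m k c fd fa x \<longleftrightarrow>
     x \<in> carrier_vec d \<and>
     A_mat d m k c \<omega> *\<^sub>v x = fd \<cdot>\<^sub>v unit_vec d (d-1) + fa \<cdot>\<^sub>v unit_vec d (p-1)"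

definition phasor :: "complex vec \<Rightarrow> nat \<Rightarrow> complex" where
  "phasor x i = (if 1 \<le> i \<and> i \<le> dim_vec x then x $ (i-1) else 0)"

definition W_max :: "(nat \<Rightarrow> real) \<Rightarrow> complex vec \<Rightarrow> nat \<Rightarrow> real" where
  "W_max k x i = 1/2 * k i * (cmod (phasor x i - phasor x (i-1)))^2"

end

theory Submission
  imports Defs
begin

text \<open>Since the displacement of mass s vanishes, its mass never enters \<open>A x\<close>, so both responses
  solve the steady-state equations of one and the same chain. For that chain the problem
  \<open>A y = g e\<^sub>p\<close>, \<open>y\<^sub>s = 0\<close> has only the trivial solution: invertibility of \<open>A\<^sub>V\<close> kills the part of y
  beyond s, row s of the tridiagonal system then kills \<open>y\<^sub>s\<^sub>-\<^sub>1\<close>, and the condition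
  \<open>a\<^sub>R\<^sup>T A\<^sub>R\<^sup>-\<^sup>1 D\<^sub>a \<noteq> 0\<close> forces \<open>g = 0\<close>, whence \<open>y = 0\<close>. Applied to \<open>y = f\<^sub>d' x - f\<^sub>d x'\<close> this shows
  that x' is a unimodular multiple of x, so every link elongation keeps its modulus.\<close>

lemma the_mat_inverse:
  fixes A :: "'a::field mat"
  assumes "invertible_mat A" "A \<in> carrier_mat n n"
  shows "the (mat_inverse A) \<in> carrier_mat n n" "the (mat_inverse A) * A = 1\<^sub>m n"
proof -
  obtain B where AB: "A * B = 1\<^sub>m n" and BA: "B * A = 1\<^sub>m (dim_row B)"
    using assms unfolding invertible_mat_def inverts_mat_def by auto
  have "B \<in> carrier_mat n n"
    using arg_cong[OF AB, of dim_col] arg_cong[OF BA, of dim_col] assms(2) by auto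
  then have "A \<in> Units (ring_mat TYPE('a) n ())"
    unfolding Units_def ring_mat_def using assms(2) AB BA by auto
  then obtain C where "mat_inverse A = Some C"
    using mat_inverse(1)[OF assms(2), of "()"] by (cases "mat_inverse A") auto
  then show "the (mat_inverse A) \<in> carrier_mat n n" "the (mat_inverse A) * A = 1\<^sub>m n"
    using mat_inverse(2)[OF assms(2)] by auto
qed

lemma invertible_mat_mult_vec_solution:
  fixes A :: "'a::field mat"
  assumes "invertible_mat A" "A \<in> carrier_mat n n" "v \<in> carrier_vec n" "A *\<^sub>v v = b"
  shows "v = the (mat_inverse A) *\<^sub>v b"
  using the_mat_inverse[OF assms(1,2)] assms(2-4) by (metis assoc_mult_mat_vec one_mult_mat_vec)

lemma invertible_mat_mult_vec_eq_zero:
  fixes A :: "'a::field mat"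
  assumes "invertible_mat A" "A \<in> carrier_mat n n" "v \<in> carrier_vec n" "A *\<^sub>v v = 0\<^sub>v n"
  shows "v = 0\<^sub>v n"
  using invertible_mat_mult_vec_solution[OF assms] the_mat_inverse(1)[OF assms(1,2)] by auto

lemma mult_mat_vec_tridiagonal:
  fixes F :: "nat \<Rightarrow> nat \<Rightarrow> 'a::comm_semiring_1"
  assumes band: "\<And>i j. j + 1 < i \<or> i + 1 < j \<Longrightarrow> F i j = 0"
    and v: "v \<in> carrier_vec n" and i: "i < n"
  shows "(mat n n (\<lambda>(i,j). F i j) *\<^sub>v v) $ i =
     F i i * v $ i + (if 0 < i then F i (i-1) * v $ (i-1) else 0)
       + (if i + 1 < n then F i (i+1) * v $ (i+1) else 0)"
proof -
  have "(mat n n (\<lambda>(i,j). F i j) *\<^sub>v v) $ i = (\<Sum>j<n. F i j * v $ j)"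
    using v i by (simp add: scalar_prod_def lessThan_atLeast0)
  also have "\<dots> = (\<Sum>j<n. (if j = i then F i i * v $ i else 0)
      + (if j + 1 = i then F i (i-1) * v $ (i-1) else 0)
      + (if j = i + 1 then F i (i+1) * v $ (i+1) else 0))"
  proof (rule sum.cong[OF refl])
    fix j
    have "j \<noteq> i \<Longrightarrow> j + 1 \<noteq> i \<Longrightarrow> j \<noteq> i + 1 \<Longrightarrow> F i j = 0"
      by (rule band) linarith
    then show "F i j * v $ j = (if j = i then F i i * v $ i else 0)
      + (if j + 1 = i then F i (i-1) * v $ (i-1) else 0)
      + (if j = i + 1 then F i (i+1) * v $ (i+1) else 0)"
      by auto
  qed
  also have "\<dots> = F i i * v $ i + (if 0 < i then F i (i-1) * v $ (i-1) else 0)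
       + (if i + 1 < n then F i (i+1) * v $ (i+1) else 0)"
    using i by (cases i) (auto simp: sum.distrib)
  finally show ?thesis .
qed

lemma tridiagonal_block_mult_vec:
  fixes F :: "nat \<Rightarrow> nat \<Rightarrow> 'a::comm_semiring_1"
  assumes band: "\<And>i j. j + 1 < i \<or> i + 1 < j \<Longrightarrow> F i j = 0"
    and x: "x \<in> carrier_vec n" and block: "b + l \<le> n" and i: "i < l"
    and lower: "0 < b \<Longrightarrow> x $ (b - 1) = 0" and upper: "b + l < n \<Longrightarrow> x $ (b + l) = 0"
  shows "(mat l l (\<lambda>(i,j). F (b+i) (b+j)) *\<^sub>v vec l (\<lambda>j. x $ (b+j))) $ i
    = (mat n n (\<lambda>(i,j). F i j) *\<^sub>v x) $ (b+i)"
proof -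
  have band': "\<And>i j. j + 1 < i \<or> i + 1 < j \<Longrightarrow> F (b+i) (b+j) = 0"
    by (rule band) linarith
  have "b + i < n" using block i by linarith
  note full = mult_mat_vec_tridiagonal[of F, OF band x this]
  have "vec l (\<lambda>j. x $ (b+j)) \<in> carrier_vec l" by simp
  note part = mult_mat_vec_tridiagonal[of "\<lambda>i j. F (b+i) (b+j)", OF band' this i]
  show ?thesis
    using block i lower upper
    by (simp only: full part) (cases "i = 0"; cases "i + 1 = l"; auto)
qed

lemma A_entry_band: "j + 1 < i \<or> i + 1 < j \<Longrightarrow> A_entry m k c \<omega> i j = 0"
  unfolding A_entry_def by auto

lemma A_R_mult_vec_index:
  assumes x: "x \<in> carrier_vec d" and "s \<le> d" "x $ (s-1) = 0" "i < s - 1"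
  shows "(A_R s m k c \<omega> *\<^sub>v vec (s-1) (\<lambda>j. x $ j)) $ i = (A_mat d m k c \<omega> *\<^sub>v x) $ i"
  using tridiagonal_block_mult_vec[of "\<lambda>i j. A_entry m k c \<omega> (i+1) (j+1)", OF A_entry_band x,
      of 0 "s-1" i] assms
  by (simp add: A_R_def A_mat_def)

lemma A_V_mult_vec_index:
  assumes x: "x \<in> carrier_vec d" and "1 \<le> s" "x $ (s-1) = 0" "i < d - s"
  shows "(A_V d s m k c \<omega> *\<^sub>v vec (d-s) (\<lambda>j. x $ (s+j))) $ i = (A_mat d m k c \<omega> *\<^sub>v x) $ (s+i)"
proof -
  have "A_V d s m k c \<omega> = mat (d-s) (d-s) (\<lambda>(i,j). A_entry m k c \<omega> (s+i+1) (s+j+1))"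
    unfolding A_V_def by (simp add: ac_simps)
  then show ?thesis
    using tridiagonal_block_mult_vec[of "\<lambda>i j. A_entry m k c \<omega> (i+1) (j+1)", OF A_entry_band x,
        of s "d-s" i] assms
    by (simp add: A_mat_def)
qed

lemma A_mat_mult_vec_index_pinned:
  assumes x: "x \<in> carrier_vec d" and "2 \<le> s" "s \<le> d" "x $ (s-1) = 0" "s < d \<Longrightarrow> x $ s = 0"
  shows "(A_mat d m k c \<omega> *\<^sub>v x) $ (s-1) = - link_imp k c \<omega> s * x $ (s-2)"
proof -
  have s: "s - 1 + 1 = s" "s - 1 - 1 = s - 2" "s - 2 + 1 = s - 1" "0 < s - 1" "s - 1 < d" using assms by auto
  have "(A_mat d m k c \<omega> *\<^sub>v x) $ (s-1) = A_entry m k c \<omega> s s * x $ (s-1)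
      + A_entry m k c \<omega> s (s-1) * x $ (s-2)
      + (if s < d then A_entry m k c \<omega> s (s+1) * x $ s else 0)"
    unfolding A_mat_def
    using mult_mat_vec_tridiagonal[of "\<lambda>i j. A_entry m k c \<omega> (i+1) (j+1)", OF A_entry_band x s(5)]
    by (simp only: s) simp
  moreover have "A_entry m k c \<omega> s (s-1) = - link_imp k c \<omega> s"
    using assms unfolding A_entry_def by auto
  ultimately show ?thesis using assms by simp
qed

lemma A_mat_pinned_tail_eq_zero:
  assumes x: "x \<in> carrier_vec d" and s: "1 \<le> s" and xs: "x $ (s-1) = 0"
    and AV: "s < d \<Longrightarrow> invertible_mat (A_V d s m k c \<omega>)"
    and rows: "\<And>i. s \<le> i \<Longrightarrow> i < d \<Longrightarrow> (A_mat d m k c \<omega> *\<^sub>v x) $ i = 0"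
    and j: "s \<le> j" "j < d"
  shows "x $ j = 0"
proof -
  define xV where "xV = vec (d-s) (\<lambda>j. x $ (s+j))"
  have "A_V d s m k c \<omega> *\<^sub>v xV = 0\<^sub>v (d-s)"
    by (rule eq_vecI) (simp_all add: xV_def A_V_mult_vec_index[OF x s xs] rows, simp add: A_V_def)
  then have "xV = 0\<^sub>v (d-s)"
    using invertible_mat_mult_vec_eq_zero[OF AV] j by (simp add: A_V_def xV_def)
  then have "xV $ (j - s) = 0" using j by simp
  moreover have "s + (j - s) = j" using j by simp
  ultimately show ?thesis using j by (simp add: xV_def)
qed

lemma A_mat_pinned_kernel:
  assumes p: "1 \<le> p" "p < s" "s \<le> d"
    and link: "link_imp k c \<omega> s \<noteq> 0" and nd: "nondegenerate d p s \<omega> m k c"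
    and x: "x \<in> carrier_vec d" and xs: "x $ (s-1) = 0"
    and Ax: "A_mat d m k c \<omega> *\<^sub>v x = g \<cdot>\<^sub>v unit_vec d (p-1)"
  shows "x = 0\<^sub>v d"
proof -
  have rows: "(A_mat d m k c \<omega> *\<^sub>v x) $ i = (if i = p - 1 then g else 0)" if "i < d" for i
    using that by (simp add: Ax unit_vec_def)
  have tail: "x $ j = 0" if "s \<le> j" "j < d" for j
    using A_mat_pinned_tail_eq_zero[OF x _ xs, of m k c \<omega>] nd rows p that
    unfolding nondegenerate_def by simp
  have "- link_imp k c \<omega> s * x $ (s-2) = 0"
    using A_mat_mult_vec_index_pinned[OF x _ _ xs tail, of m k c \<omega>] rows[of "s-1"] p by simp
  then have xs2: "x $ (s-2) = 0" using link by simp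
  define xR where "xR = vec (s-1) (\<lambda>j. x $ j)"
  define B where "B = the (mat_inverse (A_R s m k c \<omega>))"
  have AR: "A_R s m k c \<omega> \<in> carrier_mat (s-1) (s-1)" by (simp add: A_R_def)
  have AR_inv: "invertible_mat (A_R s m k c \<omega>)" using nd by (simp add: nondegenerate_def)
  have B: "B \<in> carrier_mat (s-1) (s-1)" using the_mat_inverse(1)[OF AR_inv AR] by (simp add: B_def)
  have "A_R s m k c \<omega> *\<^sub>v xR = g \<cdot>\<^sub>v D_a s p"
  proof (rule eq_vecI)
    fix i assume "i < dim_vec (g \<cdot>\<^sub>v D_a s p)"
    then have i: "i < s - 1" by (simp add: D_a_def)
    show "(A_R s m k c \<omega> *\<^sub>v xR) $ i = (g \<cdot>\<^sub>v D_a s p) $ i"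
      unfolding xR_def A_R_mult_vec_index[OF x p(3) xs i] using i p by (simp add: rows D_a_def)
  qed (simp add: A_R_def D_a_def)
  then have "xR = B *\<^sub>v (g \<cdot>\<^sub>v D_a s p)"
    unfolding B_def by (rule invertible_mat_mult_vec_solution[OF AR_inv AR, rotated]) (simp add: xR_def)
  then have xR: "xR = g \<cdot>\<^sub>v (B *\<^sub>v D_a s p)"
    using mult_mat_vec[OF B] by (simp add: D_a_def)
  have "a_R s k c \<omega> = (- link_imp k c \<omega> s) \<cdot>\<^sub>v unit_vec (s-1) (s-2)"
    unfolding a_R_def by (rule eq_vecI) auto
  then have "a_R s k c \<omega> \<bullet> xR = - link_imp k c \<omega> s * x $ (s-2)"
    using p by (simp add: xR_def)
  then have "g * (a_R s k c \<omega> \<bullet> (B *\<^sub>v D_a s p)) = 0"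
    using xs2 B unfolding xR by (simp add: a_R_def D_a_def)
  then have "g = 0" using nd unfolding nondegenerate_def B_def[symmetric] by simp
  then have head: "x $ j = 0" if "j < s - 1" for j
    using arg_cong[OF xR, of "\<lambda>v. v $ j"] that B by (simp add: xR_def)
  show ?thesis
  proof (rule eq_vecI)
    fix i assume "i < dim_vec (0\<^sub>v d :: complex vec)"
    then show "x $ i = 0\<^sub>v d $ i"
      using head xs tail by (cases "i < s - 1"; cases "i = s - 1") auto
  qed (use x in simp)
qed

lemma link_imp_nonzero: "0 < k i \<Longrightarrow> link_imp k c \<omega> i \<noteq> 0"
  unfolding link_imp_def by (auto simp: complex_eq_iff)

lemma A_mat_mult_vec_pinned_cong:
  assumes x: "x \<in> carrier_vec d" and s: "1 \<le> s" and xs: "x $ (s-1) = 0"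
    and mm: "\<forall>i\<in>{1..d}. i \<noteq> s \<longrightarrow> m i = m' i"
    and kc: "\<forall>i\<in>{1..d+1}. k i = k' i \<and> c i = c' i"
  shows "A_mat d m k c \<omega> *\<^sub>v x = A_mat d m' k' c' \<omega> *\<^sub>v x"
proof (rule eq_vecI)
  fix i assume "i < dim_vec (A_mat d m' k' c' \<omega> *\<^sub>v x)"
  then have i: "i < d" by (simp add: A_mat_def)
  have "(\<Sum>j\<in>{0..<d}. A_entry m k c \<omega> (i+1) (j+1) * x $ j)
      = (\<Sum>j\<in>{0..<d}. A_entry m' k' c' \<omega> (i+1) (j+1) * x $ j)"
  proof (rule sum.cong[OF refl])
    fix j
    show "A_entry m k c \<omega> (i+1) (j+1) * x $ j = A_entry m' k' c' \<omega> (i+1) (j+1) * x $ j"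
    proof (cases "i = j \<and> j = s - 1")
      case True
      then show ?thesis using xs by simp
    next
      case False
      then have "i = j \<Longrightarrow> m (i+1) = m' (i+1)" using mm i s by auto
      moreover have "k (i+1) = k' (i+1)" "c (i+1) = c' (i+1)" "k (i+2) = k' (i+2)" "c (i+2) = c' (i+2)"
        using kc i by auto
      ultimately show ?thesis
        unfolding A_entry_def link_imp_def by (auto simp: numeral_2_eq_2)
    qed
  qed
  then show "(A_mat d m k c \<omega> *\<^sub>v x) $ i = (A_mat d m' k' c' \<omega> *\<^sub>v x) $ i"
    using i x by (simp add: A_mat_def scalar_prod_def)
qed (simp add: A_mat_def)

lemma pinned_steady_states_unimodular_multiple:
  assumes p: "1 \<le> p" "p < s" "s \<le> d"
    and link: "link_imp k c \<omega> s \<noteq> 0" and nd: "nondegenerate d p s \<omega> m k c"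
    and ss: "steady_state d p \<omega> m k c fd fa x" and xs: "x $ (s-1) = 0"
    and ss': "steady_state d p \<omega> m k c fd' fa' x'" and xs': "x' $ (s-1) = 0"
    and fd: "cmod fd = cmod fd'"
  obtains r where "cmod r = 1" "x' = r \<cdot>\<^sub>v x"
proof -
  let ?A = "A_mat d m k c \<omega>"
  have x: "x \<in> carrier_vec d" and x': "x' \<in> carrier_vec d"
    using ss ss' by (auto simp: steady_state_def)
  have A: "?A \<in> carrier_mat d d" by (simp add: A_mat_def)
  note kernel = A_mat_pinned_kernel[OF p link nd]
  define y where "y = fd' \<cdot>\<^sub>v x - fd \<cdot>\<^sub>v x'"
  have y: "y \<in> carrier_vec d" using x x' by (simp add: y_def)
  have "?A *\<^sub>v y = fd' \<cdot>\<^sub>v (?A *\<^sub>v x) - fd \<cdot>\<^sub>v (?A *\<^sub>v x')"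
    unfolding y_def using A x x' by (simp add: mult_minus_distrib_mat_vec mult_mat_vec)
  also have "\<dots> = (fd' * fa - fd * fa') \<cdot>\<^sub>v unit_vec d (p-1)"
    using ss ss' by (auto simp: steady_state_def algebra_simps)
  finally have y0: "y = 0\<^sub>v d"
    using kernel[OF y] xs xs' x x' p by (simp add: y_def)
  have scaled: "fd' \<cdot>\<^sub>v x = fd \<cdot>\<^sub>v x'"
  proof (rule eq_vecI)
    fix i assume "i < dim_vec (fd \<cdot>\<^sub>v x')"
    then have "i < d" "y $ i = 0" using x' y0 by auto
    then show "(fd' \<cdot>\<^sub>v x) $ i = (fd \<cdot>\<^sub>v x') $ i" using x x' by (simp add: y_def)
  qed (use x x' in simp)
  show ?thesis
  proof (cases "fd = 0")
    case True
    then have "fd' = 0" using fd by simp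
    then have "?A *\<^sub>v x = fa \<cdot>\<^sub>v unit_vec d (p-1)" "?A *\<^sub>v x' = fa' \<cdot>\<^sub>v unit_vec d (p-1)"
      using ss ss' True by (auto simp: steady_state_def)
    then have "x = 0\<^sub>v d" "x' = 0\<^sub>v d" using kernel[OF x xs] kernel[OF x' xs'] by auto
    then show ?thesis using that[of 1] by simp
  next
    case False
    have "x' = (fd' / fd) \<cdot>\<^sub>v x"
      using arg_cong[OF scaled, of "\<lambda>v. (1 / fd) \<cdot>\<^sub>v v"] False x'
      by (simp add: smult_smult_assoc)
    moreover have "cmod (fd' / fd) = 1" using False by (simp add: norm_divide flip: fd)
    ultimately show ?thesis using that by blast
  qed
qed

lemma W_max_smult_unimodular:
  assumes "cmod r = 1"
  shows "W_max k (r \<cdot>\<^sub>v x) i = W_max k x i"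
proof -
  have "phasor (r \<cdot>\<^sub>v x) j = r * phasor x j" for j by (cases j) (auto simp: phasor_def)
  then show ?thesis
    using assms by (simp add: W_max_def right_diff_distrib[symmetric] norm_mult)
qed

theorem theorem1:
  fixes d p s :: nat and \<omega> :: real
    and m k c m' k' c' :: "nat \<Rightarrow> real"
    and fd fa fd' fa' :: complex and x x' :: "complex vec"
  assumes "2 \<le> d" "1 \<le> p" "p < s" "s \<le> d" "\<omega> > 0"
    and "chain_params d m k c" "chain_params d m' k' c'"
    and "nondegenerate d p s \<omega> m k c" "nondegenerate d p s \<omega> m' k' c'"
    and "steady_state d p \<omega> m k c fd fa x" "x $ (s-1) = 0"
    and "steady_state d p \<omega> m' k' c' fd' fa' x'" "x' $ (s-1) = 0"
    and "cmod fd = cmod fd'"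
    and "\<forall>i\<in>{1..d}. i \<noteq> s \<longrightarrow> m i = m' i"
    and "\<forall>i\<in>{1..d+1}. k i = k' i \<and> c i = c' i"
  shows "\<forall>i\<in>{1..d+1}. W_max k x i = W_max k' x' i"
proof -
  have link: "link_imp k c \<omega> s \<noteq> 0"
    using assms(2-4,6) by (intro link_imp_nonzero) (auto simp: chain_params_def)
  have x': "x' \<in> carrier_vec d" using assms(12) by (simp add: steady_state_def)
  have "A_mat d m k c \<omega> *\<^sub>v x' = A_mat d m' k' c' \<omega> *\<^sub>v x'"
    using A_mat_mult_vec_pinned_cong[OF x' _ assms(13,15,16)] assms(2,3) by simp
  then have "steady_state d p \<omega> m k c fd' fa' x'"
    using assms(12) by (simp add: steady_state_def)
  then obtain r where r: "cmod r = 1" "x' = r \<cdot>\<^sub>v x"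
    using pinned_steady_states_unimodular_multiple[OF assms(2-4) link assms(8,10,11) _ assms(13,14)]
    by blast
  show ?thesis
  proof
    fix i assume "i \<in> {1..d+1}"
    then have "W_max k' x' i = W_max k x' i" using assms(16) by (simp add: W_max_def)
    also have "\<dots> = W_max k x i" using r by (simp add: W_max_smult_unimodular)
    finally show "W_max k x i = W_max k' x' i" by simp
  qed
qed

end
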